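(* Let $\mathscr{O}$ be an operad in $\mathbbm{k}$-vector spaces and $\mu\in\mathscr{O}(2)$ satisfy the right Leibniz condition. Suppose $F\in\mathcal{F}_{\mathscr{O}}$ satisfies $\kappa_\mu F\in\mathcal{F}^\mu_{\mathscr{O}}$. Then for every subobject $K\subset F$, $\kappa_\mu K\in\mathcal{F}^\mu_{\mathscr{O}}$.
   Context: $\mathbf{Cat}\,\mathscr{O}$ is the $\mathbbm{k}$-linear PROP associated to $\mathscr{O}$ (objects $\mathbb{N}$, $\mathbf{Cat}\,\mathscr{O}(m,n)=\bigoplus_{f:\{1..m\}\to\{1..n\}}\bigotimes_i\mathscr{O}(|f^{-1}(i)|)$, $\boxplus$ = addition on objects); $\mathcal{F}_{\mathscr{O}}$ is the category of $\mathbbm{k}$-linear functors $\mathbf{Cat}\,\mathscr{O}\to\mathbbm{k}$-vector spaces. $\delta F(n)=F(n+1)$, $\xi$ acting by $F(\xi\boxplus\mathrm{Id}_1)$. For $1\le i\le n$, $\mu_i(n)\in\mathbf{Cat}\,\mathscr{O}(n+1,n)$ is given by the map $j\mapsto j$ ($j\le n$), $n+1\mapsto i$, identity on singleton fibres and $\mu$ with inputs $(i,n+1)$ over $i$. Right Leibniz condition: $\mu\circ(\nu\boxplus\mathrm{Id}_1)=\nu\circ\sum_i\mu_i(n)$ in $\mathscr{O}(n+1)$ for all $n,\nu\in\mathscr{O}(n)$; then $\widetilde\mu_F(n)=F(\sum_i\mu_i(n))$ defines a natural transformation $\widetilde\mu_F:\delta F\to F$. $\mathcal{F}^\mu_{\mathscr{O}}$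 is the full subcategory of $F$ with $\widetilde\mu_F=0$, and $\kappa_\mu F:=\ker\widetilde\mu_F$. *)

theory Defs
  imports Main "HOL.Vector_Spaces" "HOL-Combinatorics.Permutations"
begin

text \<open>Finite sets {1..m} of the paper are represented 0-based as {0..<m} (natural order).
 Vector spaces over a field 'k are subspaces of an ambient 'k-vector space (scale function).\<close>

definition lin_on :: "('k::field \<Rightarrow> 'a::ab_group_add \<Rightarrow> 'a) \<Rightarrow> ('k \<Rightarrow> 'b::ab_group_add \<Rightarrow> 'b)
    \<Rightarrow> 'a set \<Rightarrow> ('a \<Rightarrow> 'b) \<Rightarrow> bool" where
  "lin_on s t S h \<longleftrightarrow> (\<forall>x\<in>S. \<forall>y\<in>S. h (x + y) = h x + h y) \<and> (\<forall>c. \<forall>x\<in>S. h (s c x) = t c (h x))"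

definition offs :: "nat list \<Rightarrow> nat \<Rightarrow> nat" where
  "offs ks q = sum_list (take q ks)"

definition perm_of_list :: "nat list \<Rightarrow> nat \<Rightarrow> nat" where
  "perm_of_list xs x = (if x < length xs then xs ! x else x)"

fun blocks :: "nat list \<Rightarrow> 'a list \<Rightarrow> 'a list list" where
  "blocks [] xs = []"
| "blocks (k # ks) xs = take k xs # blocks ks (drop k xs)"

text \<open>ar n = O(n); gam ks th phs = gamma(th; phs) with phs!j in O(ks!j);
 rel n b th relabels the inputs of th in O(n): input p becomes input (b p), b a permutation of {0..<n};
 unit = identity operation in O(1).\<close>

record ('k, 'o) operad =
  osc :: "'k \<Rightarrow> 'o \<Rightarrow> 'o"
  ar :: "nat \<Rightarrow> 'o set"
  gam :: "nat list \<Rightarrow> 'o \<Rightarrow> 'o list \<Rightarrow> 'o"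
  rel :: "nat \<Rightarrow> (nat \<Rightarrow> nat) \<Rightarrow> 'o \<Rightarrow> 'o"
  unit :: 'o

definition gam_args :: "('k, 'o) operad \<Rightarrow> nat list \<Rightarrow> 'o \<Rightarrow> 'o list \<Rightarrow> bool" where
  "gam_args P ks th phs \<longleftrightarrow> length phs = length ks \<and> th \<in> ar P (length ks)
     \<and> (\<forall>j<length ks. phs ! j \<in> ar P (ks ! j))"

definition is_operad :: "('k::field, 'o::ab_group_add) operad \<Rightarrow> bool" where
  "is_operad P \<longleftrightarrow>
     vector_space (osc P)
   \<and> (\<forall>n. module.subspace (osc P) (ar P n))
   \<and> unit P \<in> ar P 1
   \<and> (\<forall>ks th phs. gam_args P ks th phs \<longrightarrow> gam P ks th phs \<in> ar P (sum_list ks))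
   \<and> (\<forall>n b th. b permutes {..<n} \<and> th \<in> ar P n \<longrightarrow> rel P n b th \<in> ar P n)
   \<and> (\<forall>n b. b permutes {..<n} \<longrightarrow> lin_on (osc P) (osc P) (ar P n) (rel P n b))
   \<and> (\<forall>ks th phs. gam_args P ks th phs \<longrightarrow>
        lin_on (osc P) (osc P) (ar P (length ks)) (\<lambda>a. gam P ks a phs))
   \<and> (\<forall>ks th phs j. gam_args P ks th phs \<and> j < length ks \<longrightarrow>
        lin_on (osc P) (osc P) (ar P (ks ! j)) (\<lambda>a. gam P ks th (phs[j := a])))
   \<and> (\<forall>n th. th \<in> ar P n \<longrightarrow> rel P n id th = th)
   \<and> (\<forall>n a b th. a permutes {..<n} \<and> b permutes {..<n} \<and> th \<in> ar P n \<longrightarrow>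
        rel P n (b \<circ> a) th = rel P n b (rel P n a th))
   \<and> (\<forall>n th. th \<in> ar P n \<longrightarrow>
        gam P (replicate n 1) th (replicate n (unit P)) = th \<and> gam P [n] (unit P) [th] = th)
   \<and> (\<forall>ks th phs ls pss. gam_args P ks th phs \<and> length ls = sum_list ks \<and> length pss = length ls
        \<and> (\<forall>q<length ls. pss ! q \<in> ar P (ls ! q)) \<longrightarrow>
        gam P ls (gam P ks th phs) pss
        = gam P (map sum_list (blocks ks ls)) th
            (map (\<lambda>j. gam P (blocks ks ls ! j) (phs ! j) (blocks ks pss ! j)) [0..<length ks]))
   \<and> (\<forall>ks th phs b. gam_args P ks th phs \<and> b permutes {..<length ks} \<longrightarrow>
        gam P ks (rel P (length ks) b th) phs
        = rel P (sum_list ks)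
            (perm_of_list (concat (map (\<lambda>p. map (\<lambda>r. offs ks (b p) + r) [0..<ks ! b p])
                                    [0..<length ks])))
            (gam P (map (\<lambda>p. ks ! b p) [0..<length ks]) th (map (\<lambda>p. phs ! b p) [0..<length ks])))
   \<and> (\<forall>ks th phs als. gam_args P ks th phs \<and> length als = length ks
        \<and> (\<forall>j<length ks. (als ! j) permutes {..<ks ! j}) \<longrightarrow>
        gam P ks th (map (\<lambda>j. rel P (ks ! j) (als ! j) (phs ! j)) [0..<length ks])
        = rel P (sum_list ks)
            (perm_of_list (concat (map (\<lambda>j. map (\<lambda>r. offs ks j + (als ! j) r) [0..<ks ! j])
                                    [0..<length ks])))
            (gam P ks th phs))"

text \<open>A pure tensor morphism m \<rightarrow> n of Cat O is a map f : {0..<m} \<rightarrow> {0..<n} with operations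
 th i \<in> O(|f^{-1}(i)|) for i < n (fibre inputs in natural order).\<close>

definition fib :: "(nat \<Rightarrow> nat) \<Rightarrow> nat \<Rightarrow> nat \<Rightarrow> nat set" where
  "fib f m i = {x. x < m \<and> f x = i}"

definition valid_mor :: "('k, 'o) operad \<Rightarrow> nat \<Rightarrow> nat \<Rightarrow> (nat \<Rightarrow> nat) \<Rightarrow> (nat \<Rightarrow> 'o) \<Rightarrow> bool" where
  "valid_mor P m n f th \<longleftrightarrow> (\<forall>x<m. f x < n) \<and> (\<forall>i<n. th i \<in> ar P (card (fib f m i)))"

text \<open>Composite (g, ph) \<circ> (f, th) of pure tensors: the operation over j is
 gamma(ph j; th i_0, ..., th i_(r-1)) (i_0 < ... < i_(r-1) the fibre of g over j),
 with inputs relabelled from block order to the natural order of the fibre of g \<circ> f over j.\<close>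

definition compC :: "('k, 'o) operad \<Rightarrow> nat \<Rightarrow> nat \<Rightarrow> (nat \<Rightarrow> nat) \<Rightarrow> (nat \<Rightarrow> 'o)
    \<Rightarrow> (nat \<Rightarrow> nat) \<Rightarrow> (nat \<Rightarrow> 'o) \<Rightarrow> nat \<Rightarrow> 'o" where
  "compC P m n f th g ph j =
     (let I = sorted_list_of_set (fib g n j);
          bl = concat (map (\<lambda>i. sorted_list_of_set (fib f m i)) I);
          rk = (\<lambda>x. card {y \<in> fib (g \<circ> f) m j. y < x})
      in rel P (length bl) (perm_of_list (map rk bl))
           (gam P (map (\<lambda>i. card (fib f m i)) I) (ph j) (map th I)))"

text \<open>xi \<boxplus> Id_1 on pure tensors.\<close>
definition boxid :: "nat \<Rightarrow> nat \<Rightarrow> (nat \<Rightarrow> nat) \<Rightarrow> nat \<Rightarrow> nat" where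
  "boxid m n f j = (if j < m then f j else n)"

definition boxe :: "('k, 'o) operad \<Rightarrow> nat \<Rightarrow> (nat \<Rightarrow> 'o) \<Rightarrow> nat \<Rightarrow> 'o" where
  "boxe P n th t = (if t < n then th t else unit P)"

text \<open>mu_i(n) : n+1 \<rightarrow> n (0-based: j \<mapsto> j for j < n, n \<mapsto> i; mu over the fibre {i, n}).\<close>
definition mumap :: "nat \<Rightarrow> nat \<Rightarrow> nat \<Rightarrow> nat" where
  "mumap n i j = (if j = n then i else j)"

definition muops :: "('k, 'o) operad \<Rightarrow> 'o \<Rightarrow> nat \<Rightarrow> nat \<Rightarrow> nat \<Rightarrow> 'o" where
  "muops P mu n i t = (if t = i then mu else unit P)"

text \<open>Right Leibniz: mu \<circ> (nu \<boxplus> Id_1) = nu \<circ> \<Sum>_i mu_i(n) in O(n+1) = Cat O(n+1, 1).\<close>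
definition right_leibniz :: "('k, 'o::ab_group_add) operad \<Rightarrow> 'o \<Rightarrow> bool" where
  "right_leibniz P mu \<longleftrightarrow> (\<forall>n nu. nu \<in> ar P n \<longrightarrow>
     compC P (Suc n) 2 (boxid n 1 (\<lambda>_. 0)) (boxe P 1 (\<lambda>_. nu)) (\<lambda>_. 0) (\<lambda>_. mu) 0
     = (\<Sum>i<n. compC P (Suc n) n (mumap n i) (muops P mu n i) (\<lambda>_. 0) (\<lambda>_. nu) 0))"

text \<open>A functor is given by spaces Fsp n and, for each pure tensor (f, th) : m \<rightarrow> n,
 a linear map Fmap m n f th : Fsp m \<rightarrow> Fsp n, multilinear in th (i.e. linear on the tensor
 product), depending only on the morphism, preserving identities and composition.\<close>

definition is_functor :: "('k::field, 'o::ab_group_add) operad \<Rightarrow> ('k \<Rightarrow> 'v::ab_group_add \<Rightarrow> 'v)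
    \<Rightarrow> (nat \<Rightarrow> 'v set) \<Rightarrow> (nat \<Rightarrow> nat \<Rightarrow> (nat \<Rightarrow> nat) \<Rightarrow> (nat \<Rightarrow> 'o) \<Rightarrow> 'v \<Rightarrow> 'v) \<Rightarrow> bool" where
  "is_functor P vsc Fsp Fmap \<longleftrightarrow>
     vector_space vsc
   \<and> (\<forall>n. module.subspace vsc (Fsp n))
   \<and> (\<forall>m n f th. valid_mor P m n f th \<longrightarrow>
        (\<forall>x\<in>Fsp m. Fmap m n f th x \<in> Fsp n) \<and> lin_on vsc vsc (Fsp m) (Fmap m n f th))
   \<and> (\<forall>m n f th i c a b. valid_mor P m n f th \<and> i < n \<and> a \<in> ar P (card (fib f m i))
        \<and> b \<in> ar P (card (fib f m i)) \<longrightarrow>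
        (\<forall>x\<in>Fsp m. Fmap m n f (th(i := osc P c a + b)) x
                    = vsc c (Fmap m n f (th(i := a)) x) + Fmap m n f (th(i := b)) x))
   \<and> (\<forall>m n f th f' th'. valid_mor P m n f th \<and> (\<forall>x<m. f x = f' x) \<and> (\<forall>i<n. th i = th' i) \<longrightarrow>
        (\<forall>x\<in>Fsp m. Fmap m n f th x = Fmap m n f' th' x))
   \<and> (\<forall>n. \<forall>x\<in>Fsp n. Fmap n n id (\<lambda>_. unit P) x = x)
   \<and> (\<forall>m n p f th g ph. valid_mor P m n f th \<and> valid_mor P n p g ph \<longrightarrow>
        (\<forall>x\<in>Fsp m. Fmap n p g ph (Fmap m n f th x) = Fmap m p (g \<circ> f) (compC P m n f th g ph) x))"

text \<open>delta F (spaces n \<mapsto> Fsp (n+1)) acts by F(xi \<boxplus> Id_1).\<close>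
definition delta :: "('k, 'o) operad \<Rightarrow> (nat \<Rightarrow> nat \<Rightarrow> (nat \<Rightarrow> nat) \<Rightarrow> (nat \<Rightarrow> 'o) \<Rightarrow> 'v \<Rightarrow> 'v)
    \<Rightarrow> nat \<Rightarrow> nat \<Rightarrow> (nat \<Rightarrow> nat) \<Rightarrow> (nat \<Rightarrow> 'o) \<Rightarrow> 'v \<Rightarrow> 'v" where
  "delta P Fmap m n f th = Fmap (Suc m) (Suc n) (boxid m n f) (boxe P n th)"

definition delta_sp :: "(nat \<Rightarrow> 'v set) \<Rightarrow> nat \<Rightarrow> 'v set" where
  "delta_sp Fsp n = Fsp (Suc n)"

text \<open>Component at n of mu~_F : delta F \<rightarrow> F, namely F(\<Sum>_i mu_i(n)).\<close>
definition mutilde :: "('k, 'o) operad \<Rightarrow> 'o \<Rightarrow> (nat \<Rightarrow> nat \<Rightarrow> (nat \<Rightarrow> nat) \<Rightarrow> (nat \<Rightarrow> 'o) \<Rightarrow> 'v \<Rightarrow> 'v)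
    \<Rightarrow> nat \<Rightarrow> 'v \<Rightarrow> 'v::comm_monoid_add" where
  "mutilde P mu Fmap n x = (\<Sum>i<n. Fmap (Suc n) n (mumap n i) (muops P mu n i) x)"

text \<open>kappa_mu F = ker mu~_F, a subfunctor of delta F (spaces; it acts by delta F).\<close>
definition kappa :: "('k, 'o) operad \<Rightarrow> 'o \<Rightarrow> (nat \<Rightarrow> 'v set)
    \<Rightarrow> (nat \<Rightarrow> nat \<Rightarrow> (nat \<Rightarrow> nat) \<Rightarrow> (nat \<Rightarrow> 'o) \<Rightarrow> 'v \<Rightarrow> 'v) \<Rightarrow> nat \<Rightarrow> 'v::comm_monoid_add set" where
  "kappa P mu Fsp Fmap n = {x \<in> delta_sp Fsp n. mutilde P mu Fmap n x = 0}"

text \<open>Membership in the full subcategory F^mu_O: an object of F_O with mu~_F = 0.\<close>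
definition in_Fmu :: "('k::field, 'o::ab_group_add) operad \<Rightarrow> ('k \<Rightarrow> 'v::ab_group_add \<Rightarrow> 'v) \<Rightarrow> 'o
    \<Rightarrow> (nat \<Rightarrow> 'v set) \<Rightarrow> (nat \<Rightarrow> nat \<Rightarrow> (nat \<Rightarrow> nat) \<Rightarrow> (nat \<Rightarrow> 'o) \<Rightarrow> 'v \<Rightarrow> 'v) \<Rightarrow> bool" where
  "in_Fmu P vsc mu Fsp Fmap \<longleftrightarrow> is_functor P vsc Fsp Fmap
     \<and> (\<forall>n. \<forall>x\<in>Fsp (Suc n). mutilde P mu Fmap n x = 0)"

end

theory Submission
  imports Defs
begin

text \<open>Since \<open>K \<subseteq> F\<close>, the kernel \<open>\<kappa>\<^sub>\<mu>K\<close> is the intersection of \<open>\<delta>K\<close> with \<open>\<kappa>\<^sub>\<mu>F\<close>. Both are stable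
  under the action of \<open>\<delta>F\<close>, so \<open>\<kappa>\<^sub>\<mu>K\<close> is a subobject of \<open>\<kappa>\<^sub>\<mu>F\<close>, and the vanishing of
  \<open>\<mu>\<close>-tilde on \<open>\<kappa>\<^sub>\<mu>F\<close> restricts to it.\<close>

lemma is_functor_vector_space: "is_functor P vsc A M \<Longrightarrow> vector_space vsc"
  by (simp add: is_functor_def)

lemma is_functor_subspace: "is_functor P vsc A M \<Longrightarrow> module.subspace vsc (A n)"
  by (simp add: is_functor_def)

lemma is_functor_map_closed:
  "is_functor P vsc A M \<Longrightarrow> valid_mor P m n f th \<Longrightarrow> x \<in> A m \<Longrightarrow> M m n f th x \<in> A n"
  by (simp add: is_functor_def)

lemma is_functor_lin_on:
  "is_functor P vsc A M \<Longrightarrow> valid_mor P m n f th \<Longrightarrow> lin_on vsc vsc (A m) (M m n f th)"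
  by (simp add: is_functor_def)

lemma is_functor_restrict:
  assumes A: "is_functor P vsc A M"
    and sub: "\<And>n. B n \<subseteq> A n"
    and sp: "\<And>n. module.subspace vsc (B n)"
    and closed: "\<And>m n f th x. valid_mor P m n f th \<Longrightarrow> x \<in> B m \<Longrightarrow> M m n f th x \<in> B n"
  shows "is_functor P vsc B M"
proof -
  have restrict: "\<forall>x\<in>B m. Q x" if "\<forall>x\<in>A m. Q x" for m Q
    using that sub[of m] by blast
  have "lin_on vsc vsc (B m) (M m n f th)" if "valid_mor P m n f th" for m n f th
    using is_functor_lin_on[OF A that] sub[of m] unfolding lin_on_def by blast
  then have maps: "\<forall>m n f th. valid_mor P m n f th \<longrightarrow>
      (\<forall>x\<in>B m. M m n f th x \<in> B n) \<and> lin_on vsc vsc (B m) (M m n f th)"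
    using closed by blast
  show ?thesis
    using A unfolding is_functor_def
    by (elim conjE, intro conjI) (simp_all add: sp maps, (intro allI impI; rule restrict; meson)+)
qed

lemma is_functor_inter:
  assumes A: "is_functor P vsc A M"
    and sp: "\<And>n. module.subspace vsc (B n)"
    and closed: "\<And>m n f th x. valid_mor P m n f th \<Longrightarrow> x \<in> B m \<Longrightarrow> M m n f th x \<in> B n"
  shows "is_functor P vsc (\<lambda>n. B n \<inter> A n) M"
proof (rule is_functor_restrict[OF A])
  have "module vsc"
    using is_functor_vector_space[OF A] by (simp add: module_iff_vector_space)
  then show "module.subspace vsc (B n \<inter> A n)" for n
    using module.subspace_inter sp is_functor_subspace[OF A] by blast
  show "M m n f th x \<in> B n \<inter> A n" if "valid_mor P m n f th" "x \<in> B m \<inter> A m" for m n f th x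
    using that closed is_functor_map_closed[OF A] by blast
qed auto

lemma in_Fmu_subobject:
  assumes "in_Fmu P vsc mu A M" "is_functor P vsc B M" "\<And>n. B n \<subseteq> A n"
  shows "in_Fmu P vsc mu B M"
  using assms unfolding in_Fmu_def by blast

lemma valid_mor_boxid:
  assumes "is_operad P" "valid_mor P m n f th"
  shows "valid_mor P (Suc m) (Suc n) (boxid m n f) (boxe P n th)"
proof -
  have unit: "unit P \<in> ar P 1"
    using assms(1) unfolding is_operad_def by blast
  have f: "\<forall>x<m. f x < n" and th: "\<forall>i<n. th i \<in> ar P (card (fib f m i))"
    using assms(2) unfolding valid_mor_def by auto
  have fib_old: "fib (boxid m n f) (Suc m) i = fib f m i" if "i < n" for i
    using that unfolding fib_def boxid_def by (auto simp: less_Suc_eq)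
  have fib_new: "fib (boxid m n f) (Suc m) n = {m}"
    using f unfolding fib_def boxid_def by (auto simp: less_Suc_eq)
  show ?thesis unfolding valid_mor_def
  proof (intro conjI allI impI)
    show "boxid m n f x < Suc n" if "x < Suc m" for x
      using that f by (auto simp: boxid_def)
    show "boxe P n th i \<in> ar P (card (fib (boxid m n f) (Suc m) i))" if "i < Suc n" for i
      using that unit th by (auto simp: less_Suc_eq fib_old fib_new boxe_def)
  qed
qed

lemma delta_map_closed:
  assumes "is_operad P" "is_functor P vsc F Fmap" "valid_mor P m n f th" "x \<in> delta_sp F m"
  shows "delta P Fmap m n f th x \<in> delta_sp F n"
  using is_functor_map_closed[OF assms(2) valid_mor_boxid[OF assms(1,3)]] assms(4)
  unfolding delta_def delta_sp_def by blast

lemma kappa_subobject_eq: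
  "(\<And>n. K n \<subseteq> F n) \<Longrightarrow> kappa P mu K Fmap = (\<lambda>n. delta_sp K n \<inter> kappa P mu F Fmap n)"
  by (auto simp: fun_eq_iff kappa_def delta_sp_def)

theorem corollary3p17:
  fixes P :: "('k::field, 'o::ab_group_add) operad"
    and vsc :: "'k \<Rightarrow> 'v::ab_group_add \<Rightarrow> 'v"
    and mu :: 'o
    and F K :: "nat \<Rightarrow> 'v set"
    and Fmap :: "nat \<Rightarrow> nat \<Rightarrow> (nat \<Rightarrow> nat) \<Rightarrow> (nat \<Rightarrow> 'o) \<Rightarrow> 'v \<Rightarrow> 'v"
  assumes "is_operad P"
    and "mu \<in> ar P 2"
    and "right_leibniz P mu"
    and "is_functor P vsc F Fmap"
    and "in_Fmu P vsc mu (kappa P mu F Fmap) (delta P Fmap)"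
    and "is_functor P vsc K Fmap"
    and "\<forall>n. K n \<subseteq> F n"
  shows "in_Fmu P vsc mu (kappa P mu K Fmap) (delta P Fmap)"
proof -
  have kappa_K: "kappa P mu K Fmap = (\<lambda>n. delta_sp K n \<inter> kappa P mu F Fmap n)"
    using assms(7) by (blast intro: kappa_subobject_eq)
  have "is_functor P vsc (kappa P mu F Fmap) (delta P Fmap)"
    using assms(5) unfolding in_Fmu_def by blast
  then have "is_functor P vsc (kappa P mu K Fmap) (delta P Fmap)"
    unfolding kappa_K
    by (rule is_functor_inter)
      (use is_functor_subspace[OF assms(6)] delta_map_closed[OF assms(1,6)] in
        \<open>simp_all add: delta_sp_def\<close>)
  then show ?thesis
    by (rule in_Fmu_subobject[OF assms(5)]) (simp add: kappa_K)
qed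

end
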